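(* Let $J,L\subseteq S$ with $n:=\#J\ge2$, $L\setminus\{l_1\}=J\setminus\{j_1,j_2\}$ and $j_1<l_1<j_2$. Then in $A$: $$\tau^-_J-(t_{j_2}t_{l_1}+t_{l_1}t_{j_2}-2q)\tau^-_{L\setminus\{l_1\}}-\tau^-_{\{j_1,j_2\}}\tau^-_L+\sum_{i=3}^n(-1)^{i+1}\tau^-_{(J\cup L)\setminus\{j_i\}}=0.$$
   Context: $S$ is a finite set with a total order $<$, $R$ a commutative ring with $1$, $q\in R$, $A=R\langle t_s\mid s\in S\rangle$ the free associative algebra. Subsets are enumerated increasingly: $J=\{j_1<\dots<j_{\#J}\}$, $L=\{l_1<\dots\}$. $t_J=t_{j_1}\cdots t_{j_{\#J}}$; for $I=\{j_{\alpha_1}<\dots<j_{\alpha_{\#I}}\}\subseteq J$, $\ell_J(I)=\sum_\nu(\alpha_\nu-\nu)$; $\tau^-_J=\sum_{I\subseteq J,\ \#I\text{ odd}}(-1)^{\ell_J(I)}(-q)^{(\#I-1)/2}t_{J\setminus I}$. *)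

theory Defs
  imports "HOL-Library.Poly_Mapping"
begin

text \<open>The free associative algebra R<t_s | s in S> is modelled as finitely supported
  R-linear combinations of words over S: the type ('s list poly_mapping type.
  Addition/subtraction are the pointwise ones of poly_mapping; the product is
  concatenation of words extended bilinearly.\<close>

type_synonym ('s, 'r) freealg = "'s list \<Rightarrow>\<^sub>0 'r"

definition amult :: "('s, 'r::comm_ring_1) freealg \<Rightarrow> ('s, 'r) freealg \<Rightarrow> ('s, 'r) freealg"
  (infixl "\<star>" 70) where
  "p \<star> q = (\<Sum>u\<in>Poly_Mapping.keys p. \<Sum>v\<in>Poly_Mapping.keys q. Poly_Mapping.single (u @ v) (Poly_Mapping.lookup p u * Poly_Mapping.lookup q v))"

text \<open>Scalars c \<in> R, embedded as c times the empty word (the unit 1 of A).\<close>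
definition ascal :: "'r::comm_ring_1 \<Rightarrow> ('s, 'r) freealg" where
  "ascal c = Poly_Mapping.single [] c"

definition asmult :: "'r::comm_ring_1 \<Rightarrow> ('s, 'r) freealg \<Rightarrow> ('s, 'r) freealg" where
  "asmult c p = Poly_Mapping.map (\<lambda>x. c * x) p"

definition gen :: "'s \<Rightarrow> ('s, 'r::comm_ring_1) freealg" where
  "gen s = Poly_Mapping.single [s] 1"

definition tmon :: "'s::linorder set \<Rightarrow> ('s, 'r::comm_ring_1) freealg" where
  "tmon J = Poly_Mapping.single (sorted_list_of_set J) 1"

text \<open>i-th element (1-based) of J in increasing order: j_i\<close>
definition enum :: "'s::linorder set \<Rightarrow> nat \<Rightarrow> 's" where
  "enum J i = sorted_list_of_set J ! (i - 1)"

text \<open>ell_J(I) = sum_nu (alpha_nu - nu) where I = {j_{alpha_1} < ... < j_{alpha_#I}}\<close>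
definition ell :: "'s::linorder set \<Rightarrow> 's set \<Rightarrow> nat" where
  "ell J I = (\<Sum>\<nu>=1..card I. (THE \<alpha>. \<alpha> \<in> {1..card J} \<and> enum J \<alpha> = enum I \<nu>) - \<nu>)"

definition tau_minus :: "'r::comm_ring_1 \<Rightarrow> 's::linorder set \<Rightarrow> ('s, 'r) freealg" where
  "tau_minus q J = (\<Sum>I\<in>{I. I \<subseteq> J \<and> odd (card I)}.
      asmult ((-1) ^ ell J I * (- q) ^ ((card I - 1) div 2)) (tmon (J - I)))"

end

theory Submission
  imports Defs
begin

text \<open>For \<open>x\<close> below all elements of \<open>X\<close>, splitting the subsets of \<open>insert x X\<close>
  according to whether they contain \<open>x\<close> gives the recursions
  \<open>\<tau>\<^sup>-(insert x X) = \<tau>\<^sup>+ X - t\<^sub>x \<tau>\<^sup>- X\<close> and \<open>\<tau>\<^sup>+(insert x X) = t\<^sub>x \<tau>\<^sup>+ X - q \<tau>\<^sup>- X\<close>,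
  where \<open>\<tau>\<^sup>+\<close> is the analogue of \<open>\<tau>\<^sup>-\<close> over subsets of even cardinality. Induction on the
  least element then shows that the alternating sum of one-element deletions of \<open>K\<close> vanishes
  for \<open>\<tau>\<^sup>-\<close> and equals \<open>\<tau>\<^sup>- K\<close> for \<open>\<tau>\<^sup>+\<close>. Writing \<open>J = {a, c} \<union> K\<close> and
  \<open>L = {b} \<union> K\<close> with \<open>a < b < c < K\<close>, the sum over \<open>i \<ge> 3\<close> in the theorem is the
  alternating deletion sum of \<open>Y \<mapsto> \<tau>\<^sup>-({a, b, c} \<union> Y) = P \<tau>\<^sup>- Y + P' \<tau>\<^sup>+ Y\<close>, hence equals
  \<open>P' \<tau>\<^sup>- K\<close>; expanding the remaining terms by the same recursions leaves an identity between
  noncommutative polynomials in \<open>t\<^sub>a, t\<^sub>b, t\<^sub>c, q\<close>.\<close>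

section \<open>The free algebra as a monoid ring\<close>

(* Words form a monoid under concatenation, so the ring structure of poly_mapping makes
   freealg the monoid ring, whose product is amult (amult_eq_times). *)
instantiation list :: (type) monoid_add
begin
definition zero_list_def: "0 = []"
definition plus_list_def: "xs + ys = xs @ ys"
instance by standard (simp_all add: zero_list_def plus_list_def)
end

lemma poly_mapping_sum_single:
  "p = (\<Sum>k\<in>Poly_Mapping.keys p. Poly_Mapping.single k (Poly_Mapping.lookup p k))"
  by (rule poly_mapping_eqI) (simp add: lookup_sum lookup_single when_def in_keys_iff)

lemma amult_eq_times: "p \<star> q = p * q"
proof -
  have "p * q = (\<Sum>u\<in>Poly_Mapping.keys p. Poly_Mapping.single u (Poly_Mapping.lookup p u)) *
      (\<Sum>v\<in>Poly_Mapping.keys q. Poly_Mapping.single v (Poly_Mapping.lookup q v))"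
    by (simp flip: poly_mapping_sum_single)
  also have "\<dots> = p \<star> q"
    by (simp add: amult_def sum_distrib_left sum_distrib_right mult_single plus_list_def
        sum.swap[of _ "Poly_Mapping.keys q"])
  finally show ?thesis by simp
qed

lemma asmult_eq_ascal_times: "asmult c p = ascal c * p"
  unfolding asmult_def ascal_def using mult_map_scale_conv_mult[of c p] by (simp add: zero_list_def)

lemma ascal_commute: "ascal c * p = p * ascal c"
proof -
  have "ascal c * (\<Sum>k\<in>Poly_Mapping.keys p. Poly_Mapping.single k (Poly_Mapping.lookup p k))
      = (\<Sum>k\<in>Poly_Mapping.keys p. Poly_Mapping.single k (Poly_Mapping.lookup p k)) * ascal c"
    by (simp add: ascal_def sum_distrib_left sum_distrib_right mult_single plus_list_def mult.commute)
  then show ?thesis by (simp flip: poly_mapping_sum_single)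
qed

lemma ascal_mult: "ascal (a * b) = ascal a * ascal b"
  by (simp add: ascal_def mult_single plus_list_def)

lemma ascal_uminus: "ascal (- a) = - ascal a"
  by (simp add: ascal_def single_uminus)

lemma ascal_one: "ascal 1 = 1"
  by (simp add: ascal_def flip: zero_list_def)

lemma ascal_minus_one_power: "ascal ((- 1) ^ n) = (- 1) ^ n"
  by (induction n) (simp_all add: ascal_one ascal_mult ascal_uminus)

lemma asmult_mult: "asmult (a * b) p = ascal a * asmult b p"
  by (simp add: asmult_eq_ascal_times ascal_mult mult.assoc)

lemma asmult_left_commute: "asmult c (p * r) = p * asmult c r"
  unfolding asmult_eq_ascal_times by (metis ascal_commute mult.assoc)

lemma asmult_minus: "asmult (- c) p = - asmult c p"
  by (simp add: asmult_eq_ascal_times ascal_uminus)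

lemma asmult_minus_one_power: "asmult ((- 1) ^ n) p = (- 1) ^ n * p"
  by (simp add: asmult_eq_ascal_times ascal_minus_one_power)

section \<open>Enumerating a finite ordered set\<close>

lemma sorted_list_of_set_insert_min:
  assumes "finite X" "\<forall>y\<in>X. x < y"
  shows "sorted_list_of_set (insert x X) = x # sorted_list_of_set X"
proof -
  have "Min (insert x X) = x" and "insert x X - {x} = X"
    using assms by (auto intro: Min_eqI less_imp_le)
  then show ?thesis
    using sorted_list_of_set_nonempty[of "insert x X"] assms(1) by simp
qed

lemma enum_insert_min_1:
  "finite X \<Longrightarrow> \<forall>y\<in>X. x < y \<Longrightarrow> enum (insert x X) 1 = x"
  unfolding enum_def by (simp only: sorted_list_of_set_insert_min) simp

lemma enum_insert_min_Suc:
  "finite X \<Longrightarrow> \<forall>y\<in>X. x < y \<Longrightarrow> p \<ge> 1 \<Longrightarrow> enum (insert x X) (Suc p) = enum X p"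
  unfolding enum_def by (simp only: sorted_list_of_set_insert_min) (cases p; simp)

lemma enum_1_least:
  assumes J: "finite J" "J \<noteq> {}"
  shows "enum J 1 \<in> J" and "\<forall>y\<in>J - {enum J 1}. enum J 1 < y"
proof -
  have "enum J 1 = Min J"
    unfolding enum_def by (subst sorted_list_of_set_nonempty[OF J]) simp
  then show "enum J 1 \<in> J" and "\<forall>y\<in>J - {enum J 1}. enum J 1 < y"
    using J by (auto simp: order.strict_iff_order)
qed

lemma enum_first_two:
  assumes J: "finite J" and two: "card J \<ge> 2"
  shows "J = insert (enum J 1) (insert (enum J 2) (J - {enum J 1, enum J 2}))"
    and "enum J 1 < enum J 2" and "\<forall>y\<in>J - {enum J 1, enum J 2}. enum J 2 < y"
proof -
  let ?a = "enum J 1" and ?J' = "J - {enum J 1}"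
  have "J \<noteq> {}" using two by auto
  then have a: "?a \<in> J" "\<forall>y\<in>?J'. ?a < y" using enum_1_least[OF J] by blast+
  then have J_eq: "J = insert ?a ?J'" by blast
  have "card ?J' \<ge> 1" using two a J by simp
  then have J': "finite ?J'" "?J' \<noteq> {}" using J by (simp, metis card.empty not_one_le_zero)
  have "enum J 2 = enum ?J' 1"
    using enum_insert_min_Suc[OF J'(1) a(2), of 1] J_eq by (simp add: numeral_2_eq_2)
  then have c: "enum J 2 \<in> ?J'" "\<forall>y\<in>?J' - {enum J 2}. enum J 2 < y"
    using enum_1_least[OF J'] by simp_all
  show "J = insert ?a (insert (enum J 2) (J - {?a, enum J 2}))" using a c by blast
  show "?a < enum J 2" using a c by blast
  show "\<forall>y\<in>J - {?a, enum J 2}. enum J 2 < y" using c by auto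
qed

lemma bij_betw_enum: "finite J \<Longrightarrow> bij_betw (enum J) {1..card J} J"
proof -
  assume "finite J"
  let ?xs = "sorted_list_of_set J"
  have "bij_betw (\<lambda>i. ?xs ! i) {..<length ?xs} (set ?xs)"
    by (simp add: bij_betw_nth)
  moreover have "bij_betw (\<lambda>\<nu>. \<nu> - 1) {1..card J} {..<length ?xs}"
    by (rule bij_betw_byWitness[where f' = Suc]) auto
  ultimately have "bij_betw ((\<lambda>i. ?xs ! i) \<circ> (\<lambda>\<nu>. \<nu> - 1)) {1..card J} (set ?xs)"
    by (rule bij_betw_trans[rotated])
  then show ?thesis
    using \<open>finite J\<close> by (simp add: enum_def[abs_def] o_def)
qed

lemma enum_strict_mono:
  assumes "finite J" "\<mu> \<in> {1..card J}" "\<nu> \<in> {1..card J}" "\<mu> < \<nu>"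
  shows "enum J \<mu> < enum J \<nu>"
  using sorted_wrt_nth_less[OF strict_sorted_list_of_set, of "\<mu> - 1" "\<nu> - 1" J] assms
  by (simp add: enum_def)

lemma card_atMost_enum:
  assumes J: "finite J" and \<nu>: "\<nu> \<in> {1..card J}"
  shows "card {z\<in>J. z \<le> enum J \<nu>} = \<nu>"
proof -
  have bij: "bij_betw (enum J) {1..card J} J" using bij_betw_enum[OF J] .
  have "{z\<in>J. z \<le> enum J \<nu>} = enum J ` {1..\<nu>}"
  proof (intro equalityI subsetI)
    fix z assume z: "z \<in> {z\<in>J. z \<le> enum J \<nu>}"
    then obtain \<mu> where \<mu>: "\<mu> \<in> {1..card J}" "z = enum J \<mu>"
      using bij unfolding bij_betw_def by blast
    then have "\<not> \<nu> < \<mu>" using z enum_strict_mono[OF J \<nu> \<mu>(1)] by auto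
    then show "z \<in> enum J ` {1..\<nu>}" using \<mu> by auto
  next
    fix z assume "z \<in> enum J ` {1..\<nu>}"
    then obtain \<mu> where "\<mu> \<in> {1..\<nu>}" "z = enum J \<mu>" by auto
    then show "z \<in> {z\<in>J. z \<le> enum J \<nu>}"
      using \<nu> bij enum_strict_mono[OF J, of \<mu> \<nu>]
      by (cases "\<mu> = \<nu>") (auto simp: bij_betw_def)
  qed
  moreover have "inj_on (enum J) {1..\<nu>}"
    using bij \<nu> by (auto simp: bij_betw_def intro: inj_on_subset)
  ultimately show ?thesis by (simp add: card_image)
qed

lemma enum_position:
  assumes J: "finite J" and y: "y \<in> J"
  shows "(THE \<alpha>. \<alpha> \<in> {1..card J} \<and> enum J \<alpha> = y) = card {z\<in>J. z \<le> y}"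
proof -
  have bij: "bij_betw (enum J) {1..card J} J" using bij_betw_enum[OF J] .
  obtain \<alpha> where \<alpha>: "\<alpha> \<in> {1..card J}" "enum J \<alpha> = y"
    using y bij_betw_imp_surj_on[OF bij] by (metis imageE)
  have "(THE \<alpha>. \<alpha> \<in> {1..card J} \<and> enum J \<alpha> = y) = \<alpha>"
  proof (rule the_equality)
    fix \<beta> assume "\<beta> \<in> {1..card J} \<and> enum J \<beta> = y"
    with \<alpha> show "\<beta> = \<alpha>" using bij_betw_imp_inj_on[OF bij] by (auto dest: inj_onD)
  qed (use \<alpha> in blast)
  then show ?thesis using card_atMost_enum[OF J \<alpha>(1)] \<alpha>(2) by simp
qed

section \<open>The sign exponent as an inversion count\<close>

lemma ell_eq_sum_inversions:
  assumes J: "finite J" and I: "I \<subseteq> J"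
  shows "ell J I = (\<Sum>y\<in>I. card {z\<in>J - I. z < y})"
proof -
  have fI: "finite I" using J I finite_subset by blast
  have "ell J I = (\<Sum>\<nu>=1..card I. card {z\<in>J - I. z < enum I \<nu>})"
    unfolding ell_def
  proof (rule sum.cong[OF refl])
    fix \<nu> assume \<nu>: "\<nu> \<in> {1..card I}"
    let ?y = "enum I \<nu>"
    have yI: "?y \<in> I" using bij_betw_apply[OF bij_betw_enum[OF fI] \<nu>] .
    have "{z\<in>J - I. z < ?y} = {z\<in>J. z \<le> ?y} - {z\<in>I. z \<le> ?y}"
      using yI by (auto simp: order_le_less)
    moreover have "{z\<in>I. z \<le> ?y} \<subseteq> {z\<in>J. z \<le> ?y}" using I by blast
    ultimately have "card {z\<in>J - I. z < ?y} = card {z\<in>J. z \<le> ?y} - card {z\<in>I. z \<le> ?y}"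
      using J by (simp add: card_Diff_subset finite_subset)
    moreover have "(THE \<alpha>. \<alpha> \<in> {1..card J} \<and> enum J \<alpha> = ?y) = card {z\<in>J. z \<le> ?y}"
      using enum_position[OF J] I yI by blast
    ultimately show "(THE \<alpha>. \<alpha> \<in> {1..card J} \<and> enum J \<alpha> = ?y) - \<nu> = card {z\<in>J - I. z < ?y}"
      using card_atMost_enum[OF fI \<nu>] by simp
  qed
  also have "\<dots> = (\<Sum>y\<in>I. card {z\<in>J - I. z < y})"
    using bij_betw_enum[OF fI] by (rule sum.reindex_bij_betw)
  finally show ?thesis .
qed

lemma ell_insert_min:
  assumes X: "finite X" and x: "\<forall>y\<in>X. x < y" and I: "I \<subseteq> X"
  shows "ell (insert x X) I = ell X I + card I"
proof -
  have step: "card {z\<in>insert x X - I. z < y} = card {z\<in>X - I. z < y} + 1" if "y \<in> I" for y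
  proof -
    have "{z\<in>insert x X - I. z < y} = insert x {z\<in>X - I. z < y}"
      using that I x by auto
    then show ?thesis using X x by auto
  qed
  have "ell (insert x X) I = (\<Sum>y\<in>I. card {z\<in>insert x X - I. z < y})"
    using X I by (intro ell_eq_sum_inversions) auto
  also have "\<dots> = (\<Sum>y\<in>I. card {z\<in>X - I. z < y} + 1)"
    using step by (rule sum.cong[OF refl])
  also have "\<dots> = ell X I + card I"
    unfolding sum.distrib ell_eq_sum_inversions[OF X I] by simp
  finally show ?thesis .
qed

lemma ell_insert_min_insert:
  assumes X: "finite X" and x: "\<forall>y\<in>X. x < y" and I: "I \<subseteq> X"
  shows "ell (insert x X) (insert x I) = ell X I"
proof -
  have xI: "x \<notin> I" and diff: "insert x X - insert x I = X - I" using x I by auto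
  have "ell (insert x X) (insert x I) = (\<Sum>y\<in>insert x I. card {z\<in>X - I. z < y})"
    using X I by (subst ell_eq_sum_inversions) (auto simp: diff)
  also have "\<dots> = card {z\<in>X - I. z < x} + ell X I"
    using xI finite_subset[OF I X] by (simp add: ell_eq_sum_inversions[OF X I])
  also have "{z\<in>X - I. z < x} = {}" using x by auto
  finally show ?thesis by simp
qed

section \<open>Recursions for \<open>\<tau>\<^sup>-\<close> and \<open>\<tau>\<^sup>+\<close>\<close>

lemma sum_subsets_insert:
  assumes X: "finite X" and x: "x \<notin> X"
  shows "(\<Sum>I\<in>{I. I \<subseteq> insert x X \<and> P (card I)}. f I)
    = (\<Sum>I\<in>{I. I \<subseteq> X \<and> P (card I)}. f I)
      + (\<Sum>I\<in>{I. I \<subseteq> X \<and> P (Suc (card I))}. f (insert x I))"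
proof -
  let ?A = "{I. I \<subseteq> X \<and> P (card I)}" and ?B = "{I. I \<subseteq> X \<and> P (Suc (card I))}"
  have card_insert: "card (insert x I) = Suc (card I)" if "I \<subseteq> X" for I
  proof -
    have "x \<notin> I" using that x by blast
    then show ?thesis using finite_subset[OF that X] by simp
  qed
  have "{I. I \<subseteq> insert x X \<and> P (card I)} = ?A \<union> insert x ` ?B"
  proof (intro equalityI subsetI)
    fix I assume "I \<in> {I. I \<subseteq> insert x X \<and> P (card I)}"
    then have I: "I \<subseteq> insert x X" "P (card I)" by auto
    show "I \<in> ?A \<union> insert x ` ?B"
    proof (cases "x \<in> I")
      case True
      then have "I = insert x (I - {x})" and "I - {x} \<subseteq> X" using I by auto
      then have "I - {x} \<in> ?B" using I card_insert[of "I - {x}"] by simp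
      with \<open>I = insert x (I - {x})\<close> show ?thesis by blast
    next
      case False
      then show ?thesis using I by auto
    qed
  qed (auto simp: card_insert)
  moreover have "finite ?A" "finite (insert x ` ?B)"
    using X by (simp_all add: finite_Collect_subsets)
  moreover have "?A \<inter> insert x ` ?B = {}" using x by auto
  moreover have "inj_on (insert x) ?B"
    using x by (auto intro!: inj_onI)
  ultimately show ?thesis by (simp add: sum.union_disjoint sum.reindex)
qed

lemma tmon_insert_min:
  "finite X \<Longrightarrow> \<forall>y\<in>X. x < y \<Longrightarrow> tmon (insert x X) = gen x * tmon X"
  unfolding tmon_def gen_def by (simp only: sorted_list_of_set_insert_min) (simp add: mult_single plus_list_def)

definition tau_plus :: "'r::comm_ring_1 \<Rightarrow> 's::linorder set \<Rightarrow> ('s, 'r) freealg" where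
  "tau_plus q J = (\<Sum>I\<in>{I. I \<subseteq> J \<and> even (card I)}.
      asmult ((-1) ^ ell J I * (- q) ^ (card I div 2)) (tmon (J - I)))"

lemma tau_minus_empty: "tau_minus q {} = 0"
proof -
  have "{I. I \<subseteq> {} \<and> odd (card I)} = {}" by auto
  show ?thesis unfolding tau_minus_def \<open>{I. I \<subseteq> {} \<and> odd (card I)} = {}\<close> by simp
qed

lemma tau_plus_empty: "tau_plus q {} = 1"
proof -
  have "{I. I \<subseteq> {} \<and> even (card I)} = {{}}" by auto
  show ?thesis
    unfolding tau_plus_def \<open>{I. I \<subseteq> {} \<and> even (card I)} = {{}}\<close>
    by (simp add: ell_def tmon_def asmult_eq_ascal_times ascal_one flip: zero_list_def)
qed

lemma tau_minus_insert_min: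
  assumes X: "finite X" and x: "\<forall>y\<in>X. x < y"
  shows "tau_minus q (insert x X) = tau_plus q X - gen x * tau_minus q X"
proof -
  have xX: "x \<notin> X" using x by blast
  let ?F = "\<lambda>I. asmult ((-1) ^ ell (insert x X) I * (- q) ^ ((card I - 1) div 2)) (tmon (insert x X - I))"
  have without_x: "?F I = - (gen x * asmult ((-1) ^ ell X I * (- q) ^ ((card I - 1) div 2)) (tmon (X - I)))"
    if "I \<in> {I. I \<subseteq> X \<and> odd (card I)}" for I
  proof -
    have "insert x X - I = insert x (X - I)" using that xX by blast
    then have t: "tmon (insert x X - I) = gen x * tmon (X - I)"
      using X x by (simp add: tmon_insert_min)
    show ?thesis
      unfolding t using that by (simp add: ell_insert_min[OF X x] power_add asmult_left_commute asmult_minus)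
  qed
  have with_x: "?F (insert x I) = asmult ((-1) ^ ell X I * (- q) ^ (card I div 2)) (tmon (X - I))"
    if "I \<in> {I. I \<subseteq> X \<and> even (card I)}" for I
  proof -
    have "x \<notin> I" using that xX by blast
    then have "insert x X - insert x I = X - I" and "card (insert x I) = Suc (card I)"
      using that xX finite_subset[of I X] X by auto
    then show ?thesis using that by (simp add: ell_insert_min_insert[OF X x])
  qed
  have "tau_minus q (insert x X)
      = (\<Sum>I\<in>{I. I \<subseteq> X \<and> odd (card I)}. ?F I)
        + (\<Sum>I\<in>{I. I \<subseteq> X \<and> even (card I)}. ?F (insert x I))"
    unfolding tau_minus_def sum_subsets_insert[OF X xX, where P = odd] even_Suc not_not ..
  also have "\<dots> = (\<Sum>I\<in>{I. I \<subseteq> X \<and> odd (card I)}.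
        - (gen x * asmult ((-1) ^ ell X I * (- q) ^ ((card I - 1) div 2)) (tmon (X - I))))
      + (\<Sum>I\<in>{I. I \<subseteq> X \<and> even (card I)}. asmult ((-1) ^ ell X I * (- q) ^ (card I div 2)) (tmon (X - I)))"
    using without_x with_x by (intro arg_cong2[where f = "(+)"] sum.cong) simp_all
  also have "\<dots> = tau_plus q X - gen x * tau_minus q X"
    by (simp add: tau_minus_def tau_plus_def sum_distrib_left sum_negf)
  finally show ?thesis .
qed

lemma tau_plus_insert_min:
  assumes X: "finite X" and x: "\<forall>y\<in>X. x < y"
  shows "tau_plus q (insert x X) = gen x * tau_plus q X - ascal q * tau_minus q X"
proof -
  have xX: "x \<notin> X" using x by blast
  let ?F = "\<lambda>I. asmult ((-1) ^ ell (insert x X) I * (- q) ^ (card I div 2)) (tmon (insert x X - I))"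
  have without_x: "?F I = gen x * asmult ((-1) ^ ell X I * (- q) ^ (card I div 2)) (tmon (X - I))"
    if "I \<in> {I. I \<subseteq> X \<and> even (card I)}" for I
  proof -
    have "insert x X - I = insert x (X - I)" using that xX by blast
    then have t: "tmon (insert x X - I) = gen x * tmon (X - I)"
      using X x by (simp add: tmon_insert_min)
    show ?thesis
      unfolding t using that by (simp add: ell_insert_min[OF X x] power_add asmult_left_commute)
  qed
  have with_x: "?F (insert x I) = - (ascal q * asmult ((-1) ^ ell X I * (- q) ^ ((card I - 1) div 2)) (tmon (X - I)))"
    if "I \<in> {I. I \<subseteq> X \<and> odd (card I)}" for I
  proof -
    have "x \<notin> I" using that xX by blast
    then have diff: "insert x X - insert x I = X - I"
      and "card (insert x I) div 2 = Suc ((card I - 1) div 2)"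
      using that xX finite_subset[of I X] X by (auto elim!: oddE)
    then have "(-1) ^ ell (insert x X) (insert x I) * (- q) ^ (card (insert x I) div 2)
        = - (q * ((-1) ^ ell X I * (- q) ^ ((card I - 1) div 2)))"
      using that by (simp add: ell_insert_min_insert[OF X x])
    then show ?thesis unfolding diff by (simp only: asmult_minus asmult_mult)
  qed
  have "tau_plus q (insert x X)
      = (\<Sum>I\<in>{I. I \<subseteq> X \<and> even (card I)}. ?F I)
        + (\<Sum>I\<in>{I. I \<subseteq> X \<and> odd (card I)}. ?F (insert x I))"
    unfolding tau_plus_def sum_subsets_insert[OF X xX, where P = even] even_Suc ..
  also have "\<dots> = (\<Sum>I\<in>{I. I \<subseteq> X \<and> even (card I)}.
        gen x * asmult ((-1) ^ ell X I * (- q) ^ (card I div 2)) (tmon (X - I)))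
      + (\<Sum>I\<in>{I. I \<subseteq> X \<and> odd (card I)}.
        - (ascal q * asmult ((-1) ^ ell X I * (- q) ^ ((card I - 1) div 2)) (tmon (X - I))))"
    using without_x with_x by (intro arg_cong2[where f = "(+)"] sum.cong) simp_all
  also have "\<dots> = gen x * tau_plus q X - ascal q * tau_minus q X"
    by (simp add: tau_minus_def tau_plus_def sum_distrib_left sum_negf)
  finally show ?thesis .
qed

section \<open>Alternating deletion sums\<close>

lemma sum_enum_insert_min:
  assumes X: "finite X" and x: "\<forall>y\<in>X. x < y"
  shows "(\<Sum>i=1..card (insert x X). g i (enum (insert x X) i))
    = g 1 x + (\<Sum>p=1..card X. g (Suc p) (enum X p))"
proof -
  let ?h = "\<lambda>i. g i (enum (insert x X) i)"
  have card: "card (insert x X) = Suc (card X)" using X x by auto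
  have "(\<Sum>i=1..card (insert x X). ?h i) = ?h 1 + (\<Sum>i=Suc 1..Suc (card X). ?h i)"
    unfolding card by (rule sum.atLeast_Suc_atMost) simp
  also have "\<dots> = ?h 1 + (\<Sum>p=1..card X. ?h (Suc p))"
    by (simp only: sum.shift_bounds_cl_Suc_ivl)
  also have "\<dots> = g 1 x + (\<Sum>p=1..card X. g (Suc p) (enum X p))"
    using X x enum_insert_min_1[OF X x] by (simp add: enum_insert_min_Suc)
  finally show ?thesis .
qed

lemma sum_enum_insert2_from_3:
  assumes K: "finite K" and ac: "a < c" and c: "\<forall>y\<in>K. c < y"
  shows "(\<Sum>i=3..card (insert a (insert c K)). g i (enum (insert a (insert c K)) i))
    = (\<Sum>p=1..card K. g (p + 2) (enum K p))"
proof -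
  have a: "\<forall>y\<in>insert c K. a < y" using ac c by auto
  have "a \<notin> insert c K" "c \<notin> K" using a c by auto
  then have "card (insert a (insert c K)) = card K + 2" using K by simp
  then have "{3..card (insert a (insert c K))} = {1 + 2..card K + 2}" by simp
  then have "(\<Sum>i=3..card (insert a (insert c K)). g i (enum (insert a (insert c K)) i))
      = (\<Sum>p=1..card K. g (p + 2) (enum (insert a (insert c K)) (p + 2)))"
    by (simp only: sum.shift_bounds_cl_nat_ivl)
  also have "\<dots> = (\<Sum>p=1..card K. g (p + 2) (enum K p))"
  proof (rule sum.cong[OF refl])
    fix p :: nat assume "p \<in> {1..card K}"
    then have "enum (insert a (insert c K)) (Suc (Suc p)) = enum K p"
      using K a c by (simp add: enum_insert_min_Suc)
    then show "g (p + 2) (enum (insert a (insert c K)) (p + 2)) = g (p + 2) (enum K p)"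
      by (simp add: numeral_2_eq_2)
  qed
  finally show ?thesis .
qed

definition alt_deletion_sum ::
    "('s::linorder set \<Rightarrow> ('s, 'r::comm_ring_1) freealg) \<Rightarrow> 's set \<Rightarrow> ('s, 'r) freealg" where
  "alt_deletion_sum f K = (\<Sum>p=1..card K. (-1) ^ (p + 1) * f (K - {enum K p}))"

lemma alt_deletion_sum_empty: "alt_deletion_sum f {} = 0"
  by (simp add: alt_deletion_sum_def)

lemma alt_deletion_sum_cong:
  "(\<And>Y. Y \<subseteq> K \<Longrightarrow> f Y = g Y) \<Longrightarrow> alt_deletion_sum f K = alt_deletion_sum g K"
  unfolding alt_deletion_sum_def by (intro sum.cong) auto

lemma alt_deletion_sum_add:
  "alt_deletion_sum (\<lambda>Y. f Y + g Y) K = alt_deletion_sum f K + alt_deletion_sum g K"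
  unfolding alt_deletion_sum_def distrib_left sum.distrib ..

lemma alt_deletion_sum_diff:
  "alt_deletion_sum (\<lambda>Y. f Y - g Y) K = alt_deletion_sum f K - alt_deletion_sum g K"
  unfolding alt_deletion_sum_def right_diff_distrib sum_subtractf ..

lemma alt_deletion_sum_mult_left:
  "alt_deletion_sum (\<lambda>Y. a * f Y) K = a * alt_deletion_sum f K"
proof -
  have "(-1) ^ n * (a * b) = a * ((-1) ^ n * b)" for n b
    by (simp add: minus_one_power_iff)
  then show ?thesis by (simp add: alt_deletion_sum_def sum_distrib_left)
qed

lemma alt_deletion_sum_insert_min:
  assumes K: "finite K" and x: "\<forall>y\<in>K. x < y"
  shows "alt_deletion_sum f (insert x K) = f K - alt_deletion_sum (\<lambda>Y. f (insert x Y)) K"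
proof -
  have "insert x K - {enum K p} = insert x (K - {enum K p})" if "p \<in> {1..card K}" for p
    using bij_betw_apply[OF bij_betw_enum[OF K] that] x by auto
  then have "(\<Sum>p=1..card K. (-1) ^ (Suc p + 1) * f (insert x K - {enum K p}))
      = - alt_deletion_sum (\<lambda>Y. f (insert x Y)) K"
    by (simp add: alt_deletion_sum_def sum_negf)
  moreover have "insert x K - {x} = K" using x by auto
  ultimately show ?thesis
    unfolding alt_deletion_sum_def
    using sum_enum_insert_min[OF K x, of "\<lambda>i y. (-1) ^ (i + 1) * f (insert x K - {y})"]
    by simp
qed

lemma alt_deletion_sum_tau_minus_tau_plus:
  fixes q :: "'r::comm_ring_1"
  assumes "finite K"
  shows "alt_deletion_sum (tau_minus q) K = (0 :: ('s::linorder, 'r) freealg)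
    \<and> alt_deletion_sum (tau_plus q) K = tau_minus q K"
  using assms
proof (induction K rule: finite_linorder_min_induct)
  case empty
  then show ?case by (simp add: alt_deletion_sum_empty tau_minus_empty)
next
  case (insert x K)
  have finite_below: "finite Y" "\<forall>y\<in>Y. x < y" if "Y \<subseteq> K" for Y
    using that insert.hyps finite_subset by auto
  have "alt_deletion_sum (\<lambda>Y. tau_minus q (insert x Y)) K
      = alt_deletion_sum (\<lambda>Y. tau_plus q Y - gen x * tau_minus q Y) K"
    by (rule alt_deletion_sum_cong) (simp add: tau_minus_insert_min finite_below)
  moreover have "alt_deletion_sum (\<lambda>Y. tau_plus q (insert x Y)) K
      = alt_deletion_sum (\<lambda>Y. gen x * tau_plus q Y - ascal q * tau_minus q Y) K"
    by (rule alt_deletion_sum_cong) (simp add: tau_plus_insert_min finite_below)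
  ultimately show ?case
    using insert.IH insert.hyps
    by (simp add: alt_deletion_sum_insert_min alt_deletion_sum_diff alt_deletion_sum_mult_left
        tau_minus_insert_min)
qed

section \<open>The four-term relation\<close>

lemma tau_minus_insert3_min:
  assumes Y: "finite Y" and ab: "a < b" and bc: "b < c" and c: "\<forall>y\<in>Y. c < y"
  shows "tau_minus q (insert a (insert b (insert c Y)))
    = (gen a * ascal q - gen b * ascal q + ascal q * gen c - gen a * gen b * gen c) * tau_minus q Y
      + (gen a * gen b - gen a * gen c + gen b * gen c - ascal q) * tau_plus q Y"
proof -
  have "\<forall>y\<in>insert c Y. b < y" "\<forall>y\<in>insert b (insert c Y). a < y"
    using ab bc c by auto
  then show ?thesis
    using Y c
    by (simp add: tau_minus_insert_min tau_plus_insert_min algebra_simps)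
qed

lemma tau_minus_four_term_relation:
  fixes q :: "'r::comm_ring_1"
  assumes K: "finite K" and ab: "a < b" and bc: "b < c" and c: "\<forall>y\<in>K. c < y"
  shows "tau_minus q (insert a (insert c K))
      - (gen c * gen b + gen b * gen c - ascal (2 * q)) * tau_minus q K
      - tau_minus q {a, c} * tau_minus q (insert b K)
      + alt_deletion_sum (\<lambda>Y. tau_minus q (insert a (insert b (insert c Y)))) K
    = (0 :: ('s::linorder, 'r) freealg)"
proof -
  define P where "P = gen a * ascal q - gen b * ascal q + ascal q * gen c - gen a * gen b * gen c"
  define P' where "P' = gen a * gen b - gen a * gen c + gen b * gen c - ascal q"
  have "alt_deletion_sum (\<lambda>Y. tau_minus q (insert a (insert b (insert c Y)))) K
      = alt_deletion_sum (\<lambda>Y. P * tau_minus q Y + P' * tau_plus q Y) K"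
  proof (rule alt_deletion_sum_cong)
    fix Y assume "Y \<subseteq> K"
    then have "finite Y" "\<forall>y\<in>Y. c < y" using finite_subset[OF _ K] c by auto
    then show "tau_minus q (insert a (insert b (insert c Y))) = P * tau_minus q Y + P' * tau_plus q Y"
      unfolding P_def P'_def by (rule tau_minus_insert3_min[OF _ ab bc])
  qed
  also have "\<dots> = P' * tau_minus q K"
    using alt_deletion_sum_tau_minus_tau_plus[OF K, of q]
    by (simp add: alt_deletion_sum_add alt_deletion_sum_mult_left)
  finally have deletions: "alt_deletion_sum (\<lambda>Y. tau_minus q (insert a (insert b (insert c Y)))) K
      = P' * tau_minus q K" .
  have a: "\<forall>y\<in>insert c K. a < y" and b: "\<forall>y\<in>K. b < y" using ab bc c by auto
  have tau_ac: "tau_minus q {a, c} = gen c - gen a"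
    using ab bc by (simp add: tau_minus_insert_min tau_plus_insert_min tau_minus_empty tau_plus_empty)
  have tau_acK: "tau_minus q (insert a (insert c K))
      = gen c * tau_plus q K - ascal q * tau_minus q K - gen a * tau_plus q K
        + gen a * gen c * tau_minus q K"
    using K a c by (simp add: tau_minus_insert_min tau_plus_insert_min algebra_simps)
  have tau_bK: "tau_minus q (insert b K) = tau_plus q K - gen b * tau_minus q K"
    using K b by (rule tau_minus_insert_min)
  have two_q: "ascal (2 * q) = ascal q + ascal q"
    unfolding ascal_def mult_2 by (rule single_add)
  show ?thesis
    unfolding deletions P'_def tau_ac tau_acK tau_bK two_q by (simp add: algebra_simps)
qed

lemma sum_from_3_eq_alt_deletion_sum:
  fixes f :: "'s::linorder set \<Rightarrow> ('s, 'r::comm_ring_1) freealg"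
  assumes K: "finite K" and ab: "a < b" and bc: "b < c" and c: "\<forall>y\<in>K. c < y"
  shows "(\<Sum>i=3..card (insert a (insert c K)). asmult ((-1) ^ (i + 1))
      (f (insert b (insert a (insert c K)) - {enum (insert a (insert c K)) i})))
    = alt_deletion_sum (\<lambda>Y. f (insert a (insert b (insert c Y)))) K"
proof -
  let ?g = "\<lambda>i y. asmult ((-1) ^ (i + 1)) (f (insert b (insert a (insert c K)) - {y}))"
  have "(\<Sum>i=3..card (insert a (insert c K)). ?g i (enum (insert a (insert c K)) i))
      = (\<Sum>p=1..card K. ?g (p + 2) (enum K p))"
    using ab bc c by (intro sum_enum_insert2_from_3[OF K]) auto
  also have "\<dots> = alt_deletion_sum (\<lambda>Y. f (insert a (insert b (insert c Y)))) K"
    unfolding alt_deletion_sum_def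
  proof (rule sum.cong[OF refl])
    fix p assume "p \<in> {1..card K}"
    then have "enum K p \<in> K" by (rule bij_betw_apply[OF bij_betw_enum[OF K]])
    then have "insert b (insert a (insert c K)) - {enum K p} = insert a (insert b (insert c (K - {enum K p})))"
      using ab bc c by auto
    moreover have "(-1 :: 'r) ^ (p + 2 + 1) = (-1) ^ (p + 1)" by simp
    ultimately show "?g (p + 2) (enum K p) = (-1) ^ (p + 1) * f (insert a (insert b (insert c (K - {enum K p}))))"
      by (simp only: asmult_minus_one_power)
  qed
  finally show ?thesis .
qed

theorem lemma3p4:
  fixes q :: "'r::comm_ring_1"
    and J L :: "'s::{finite,linorder} set"
  assumes "card J \<ge> 2"
    and "L \<noteq> {}"
    and "L - {enum L 1} = J - {enum J 1, enum J 2}"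
    and "enum J 1 < enum L 1" and "enum L 1 < enum J 2"
  shows "tau_minus q J
      - (gen (enum J 2) \<star> gen (enum L 1) + gen (enum L 1) \<star> gen (enum J 2) - ascal (2 * q))
          \<star> tau_minus q (L - {enum L 1})
      - tau_minus q {enum J 1, enum J 2} \<star> tau_minus q L
      + (\<Sum>i=3..card J. asmult ((-1) ^ (i + 1)) (tau_minus q ((J \<union> L) - {enum J i})))
    = (0 :: ('s, 'r) freealg)"
proof -
  define a b c K where "a = enum J 1" and "b = enum L 1" and "c = enum J 2" and "K = J - {a, c}"
  have K: "finite K" and ab: "a < b" and bc: "b < c"
    using assms(4,5) by (simp_all add: a_def b_def c_def)
  have J: "J = insert a (insert c K)" and c: "\<forall>y\<in>K. c < y"
    using enum_first_two[OF _ assms(1)] by (simp_all add: a_def c_def K_def)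
  have LK: "L - {b} = K" using assms(3) by (simp add: a_def b_def c_def K_def)
  then have L: "L = insert b K" using enum_1_least(1)[OF _ assms(2)] by (auto simp: b_def)
  then have JL: "J \<union> L = insert b J" using J by auto
  show ?thesis
    unfolding amult_eq_times a_def[symmetric] b_def[symmetric] c_def[symmetric] LK JL
    using tau_minus_four_term_relation[OF K ab bc c, of q]
      sum_from_3_eq_alt_deletion_sum[OF K ab bc c, of "tau_minus q"]
    by (simp only: J L)
qed

end
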